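(* For every integer $x\ge 3$, $$s^-(x+1)\;\ge\;s^-(x)+\frac{\log 2}{x}.$$
   Context: A square is a nonempty word of the form $uu$; a word is square-free if no contiguous subword of it is a square. $\omega_n^-(x)$ is the number of square-free words of length $n$ over an $x$-letter alphabet and $s^-(x)=\lim_{n\to\infty}\frac1n\log\omega_n^-(x)$ (this limit exists). *)

theory Defs
  imports "HOL-Analysis.Analysis"
begin

definition is_square :: "'a list \<Rightarrow> bool" where
  "is_square w \<longleftrightarrow> (\<exists>u. u \<noteq> [] \<and> w = u @ u)"

definition square_free :: "'a list \<Rightarrow> bool" where
  "square_free w \<longleftrightarrow> \<not> (\<exists>p u s. w = p @ u @ s \<and> is_square u)"

definition omega_minus :: "nat \<Rightarrow> nat \<Rightarrow> nat" where
  "omega_minus n x = card {w :: nat list. length w = n \<and> set w \<subseteq> {0..<x} \<and> square_free w}"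

definition s_minus :: "nat \<Rightarrow> real" where
  "s_minus x = lim (\<lambda>n. ln (real (omega_minus n x)) / real n)"

end

theory Submission
  imports Defs
begin

(*
  By Fekete's lemma, s_minus k is the infimum of ln (omega_minus n k) / n, so
  E = exp (s_minus x) satisfies E ^ n <= omega_minus n x.  Inserting the new letter x
  into a square-free word over {0..<x} at positions no two of which are adjacent gives
  a square-free word over {0..x}, and different insertions give different words.
  Weighting a pattern of length n with c unmarked positions by E ^ c, the total weight
  obeys W (n + 2) = E * W (n + 1) + E * W n, so it is at least (E * q) ^ n whenever
  E * q <= E + 1 and (E * q)^2 <= E * (E * q + 1).  For q = 2 powr (1 / x) both follow from
  Bernoulli's inequality q <= 1 + 1 / x and from E <= x - 1, which holds because the last
  two letters of a square-free word differ.  If some omega_minus N x vanishes, then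
  s_minus x = 0 and the claim follows from omega_minus n (x + 1) >= 2 ^ n, obtained by
  counting one-letter extensions of square-free words over at least four letters.
*)

lemma Fekete_subadditive:
  fixes a :: "nat \<Rightarrow> real"
  assumes nonneg: "\<And>n. 0 \<le> a n" and subadd: "\<And>m n. a (m + n) \<le> a m + a n"
  shows "(\<lambda>n. a n / real n) \<longlonglongrightarrow> (INF n\<in>{1..}. a n / real n)"
proof -
  define L where "L = (INF n\<in>{1..}. a n / real n)"
  have bdd: "bdd_below ((\<lambda>n. a n / real n) ` {1..})"
    by (rule bdd_belowI[where m = 0]) (auto simp: nonneg)
  have L_le: "L \<le> a n / real n" if "n \<ge> 1" for n
    unfolding L_def using bdd that by (intro cInf_lower) auto
  have multiple: "a (q * k + r) \<le> real q * a k + a r" for q k r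
  proof (induction q)
    case (Suc q)
    have "a (Suc q * k + r) = a (k + (q * k + r))" by (simp add: add.assoc)
    also have "\<dots> \<le> a k + a (q * k + r)" by (rule subadd)
    finally show ?case using Suc by (simp add: algebra_simps)
  qed simp
  show ?thesis
    unfolding L_def[symmetric]
  proof (rule order_tendstoI)
    fix y assume "y < L"
    then show "eventually (\<lambda>n. y < a n / real n) sequentially"
      using L_le by (intro eventually_sequentiallyI[of 1]) (auto intro: less_le_trans)
  next
    fix y assume "L < y"
    define e where "e = (y - L) / 2"
    have e: "e > 0" "L + e + e = y" using \<open>L < y\<close> by (simp_all add: e_def)
    have "L < L + e" using e(1) by simp
    then obtain k where k: "k \<ge> 1" "a k / real k < L + e"
      using bdd unfolding L_def by (subst (asm) cInf_less_iff) auto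
    define M where "M = (\<Sum>r<k. a r)"
    have a_le_M: "a r \<le> M" if "r < k" for r
      unfolding M_def using that nonneg by (intro member_le_sum) auto
    obtain N :: nat where N: "M / e < real N" using reals_Archimedean2 by blast
    show "eventually (\<lambda>n. a n / real n < y) sequentially"
    proof (rule eventually_sequentiallyI[of "max N 1"])
      fix n assume n: "max N 1 \<le> n"
      then have n_pos: "real n > 0" by simp
      have "a n = a ((n div k) * k + n mod k)" by simp
      also have "\<dots> \<le> real (n div k) * a k + M"
        using multiple[of "n div k" k "n mod k"] a_le_M[of "n mod k"] k(1) by simp
      also have "real (n div k) * a k = real (n div k * k) * (a k / real k)"
        using k(1) by simp
      also have "\<dots> \<le> real n * (a k / real k)"
        using nonneg[of k] by (intro mult_right_mono) (auto simp flip: of_nat_mult)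
      finally have "a n / real n \<le> a k / real k + M / real n"
        using n_pos by (simp add: field_simps)
      moreover have "M < e * real n"
      proof -
        have "M < e * real N" using N e(1) by (simp add: field_simps)
        also have "\<dots> \<le> e * real n" using n e(1) by simp
        finally show ?thesis .
      qed
      then have "M / real n < e" using n_pos by (simp add: field_simps)
      ultimately show "a n / real n < y" using k(2) e(2) by linarith
    qed
  qed
qed

definition square_free_words :: "nat \<Rightarrow> nat \<Rightarrow> nat list set" where
  "square_free_words k n = {w. length w = n \<and> set w \<subseteq> {0..<k} \<and> square_free w}"

lemma omega_minus_eq_card: "omega_minus n k = card (square_free_words k n)"
  unfolding omega_minus_def square_free_words_def ..

lemma finite_square_free_words: "finite (square_free_words k n)"
proof (rule finite_subset)
  show "square_free_words k n \<subseteq> {w. set w \<subseteq> {0..<k} \<and> length w = n}"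
    unfolding square_free_words_def by auto
qed (simp add: finite_lists_length_eq)

lemma square_free_appendD: "square_free (p @ w @ s) \<Longrightarrow> square_free w"
  unfolding square_free_def by (metis append.assoc)

lemma square_free_take: "square_free w \<Longrightarrow> square_free (take m w)"
  using square_free_appendD[of "[]" "take m w" "drop m w"] by simp

lemma square_free_drop: "square_free w \<Longrightarrow> square_free (drop m w)"
  using square_free_appendD[of "take m w" "drop m w" "[]"] by simp

lemma take_in_square_free_words:
  "w \<in> square_free_words k n \<Longrightarrow> m \<le> n \<Longrightarrow> take m w \<in> square_free_words k m"
  unfolding square_free_words_def by (auto simp: square_free_take dest: in_set_takeD)

lemma omega_minus_0: "omega_minus 0 k = 1"
proof -
  have "square_free []" unfolding square_free_def is_square_def by auto
  then have "square_free_words k 0 = {[]}" unfolding square_free_words_def by auto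
  then show ?thesis unfolding omega_minus_eq_card by simp
qed

lemma omega_minus_add_le: "omega_minus (m + n) k \<le> omega_minus m k * omega_minus n k"
proof -
  have "card (square_free_words k (m + n)) \<le> card (square_free_words k m \<times> square_free_words k n)"
  proof (rule card_inj_on_le[where f = "\<lambda>w. (take m w, drop m w)"])
    show "inj_on (\<lambda>w. (take m w, drop m w)) (square_free_words k (m + n))"
      by (rule inj_onI) (metis append_take_drop_id prod.inject)
    show "(\<lambda>w. (take m w, drop m w)) ` square_free_words k (m + n)
        \<subseteq> square_free_words k m \<times> square_free_words k n"
      unfolding square_free_words_def
      by (auto simp: square_free_take square_free_drop dest: in_set_takeD in_set_dropD)
  qed (simp add: finite_square_free_words)
  then show ?thesis unfolding omega_minus_eq_card by (simp add: card_cartesian_product)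
qed

lemma omega_minus_eq_0_mono:
  assumes "omega_minus N k = 0" "N \<le> n"
  shows "omega_minus n k = 0"
proof (rule ccontr)
  assume "omega_minus n k \<noteq> 0"
  then obtain w where "w \<in> square_free_words k n"
    unfolding omega_minus_eq_card by fastforce
  then have "take N w \<in> square_free_words k N"
    using assms(2) by (rule take_in_square_free_words)
  then show False
    using assms(1) finite_square_free_words unfolding omega_minus_eq_card by (simp add: card_eq_0_iff)
qed

lemma s_minus_eq_0:
  assumes "omega_minus N k = 0"
  shows "s_minus k = 0"
proof -
  have "(\<lambda>n. ln (real (omega_minus n k)) / real n) \<longlonglongrightarrow> 0"
    by (rule tendsto_eventually, rule eventually_sequentiallyI[of N])
      (simp add: omega_minus_eq_0_mono[OF assms])
  then show ?thesis unfolding s_minus_def by (rule limI)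
qed

lemma s_minus_eq_INF:
  assumes pos: "\<And>n. 0 < omega_minus n k"
  shows "(\<lambda>n. ln (real (omega_minus n k)) / real n) \<longlonglongrightarrow> s_minus k"
    and "s_minus k = (INF n\<in>{1..}. ln (real (omega_minus n k)) / real n)"
proof -
  have subadd: "ln (real (omega_minus (m + n) k))
      \<le> ln (real (omega_minus m k)) + ln (real (omega_minus n k))" for m n
  proof -
    have "real (omega_minus (m + n) k) \<le> real (omega_minus m k) * real (omega_minus n k)"
      using omega_minus_add_le[of m n k] by (simp flip: of_nat_mult)
    then have "ln (real (omega_minus (m + n) k))
        \<le> ln (real (omega_minus m k) * real (omega_minus n k))"
      using pos[of "m + n"] by simp
    then show ?thesis using pos[of m] pos[of n] by (simp add: ln_mult)
  qed
  have "(\<lambda>n. ln (real (omega_minus n k)) / real n)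
      \<longlonglongrightarrow> (INF n\<in>{1..}. ln (real (omega_minus n k)) / real n)"
    by (rule Fekete_subadditive) (use pos in \<open>simp_all add: Suc_le_eq subadd\<close>)
  moreover from this show "s_minus k = (INF n\<in>{1..}. ln (real (omega_minus n k)) / real n)"
    unfolding s_minus_def by (rule limI)
  ultimately show "(\<lambda>n. ln (real (omega_minus n k)) / real n) \<longlonglongrightarrow> s_minus k"
    by simp
qed

lemma exp_s_minus_power_le:
  assumes pos: "\<And>n. 0 < omega_minus n k"
  shows "exp (s_minus k) ^ n \<le> omega_minus n k"
proof (cases "n = 0")
  case False
  have "bdd_below ((\<lambda>n. ln (real (omega_minus n k)) / real n) ` {1..})"
    using pos by (intro bdd_belowI[where m = 0]) (auto simp: Suc_le_eq)
  then have "s_minus k \<le> ln (real (omega_minus n k)) / real n"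
    unfolding s_minus_eq_INF(2)[OF pos] using False by (intro cInf_lower) auto
  then have "real n * s_minus k \<le> ln (real (omega_minus n k))"
    using False by (simp add: field_simps)
  then have "exp (real n * s_minus k) \<le> exp (ln (real (omega_minus n k)))" by simp
  then show ?thesis using pos[of n] by (simp add: exp_of_nat_mult)
qed (simp add: omega_minus_0)

lemma ln_le_s_minus:
  fixes c :: real
  assumes "c > 0" and power_le: "\<And>n. c ^ n \<le> omega_minus n k"
  shows "ln c \<le> s_minus k"
proof (rule LIMSEQ_le_const)
  have "0 < real (omega_minus n k)" for n
    using power_le[of n] \<open>c > 0\<close> by (meson less_le_trans zero_less_power)
  then show "(\<lambda>n. ln (real (omega_minus n k)) / real n) \<longlonglongrightarrow> s_minus k"
    by (intro s_minus_eq_INF) simp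
  have "ln c \<le> ln (real (omega_minus n k)) / real n" if "n \<ge> 1" for n
  proof -
    have "real n * ln c = ln (c ^ n)" using \<open>c > 0\<close> by (simp add: ln_realpow)
    also have "\<dots> \<le> ln (real (omega_minus n k))"
      using power_le[of n] \<open>c > 0\<close> by (simp add: ln_mono)
    finally show ?thesis using that by (simp add: field_simps)
  qed
  then show "\<exists>N. \<forall>n\<ge>N. ln c \<le> ln (real (omega_minus n k)) / real n" by blast
qed

lemma exp_s_minus_le:
  fixes c C :: real
  assumes pos: "\<And>n. 0 < omega_minus n k" and "c > 0"
    and le_power: "\<And>n. real (omega_minus (Suc n) k) \<le> C * c ^ n"
  shows "exp (s_minus k) \<le> c"
proof (rule ccontr)
  define E where "E = exp (s_minus k)"
  assume "\<not> exp (s_minus k) \<le> c"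
  then have "1 < E / c" using \<open>c > 0\<close> by (simp add: E_def)
  then obtain n where n: "C / E < (E / c) ^ n" using real_arch_pow by blast
  have "E * E ^ n \<le> C * c ^ n"
    using exp_s_minus_power_le[OF pos, of "Suc n"] le_power[of n] unfolding E_def by simp
  then have "(E / c) ^ n \<le> C / E"
    using \<open>c > 0\<close> by (simp add: E_def power_divide field_simps)
  with n show False by simp
qed

lemma square_free_snoc_cases:
  assumes "square_free w" "\<not> square_free (w @ [a])"
  obtains p r where "w @ [a] = p @ r @ r" "r \<noteq> []"
proof -
  obtain p u s where v: "w @ [a] = p @ u @ s" and "is_square u"
    using assms(2) unfolding square_free_def by blast
  then obtain r where r: "r \<noteq> []" "u = r @ r" unfolding is_square_def by blast
  have "s = []"
  proof (rule ccontr)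
    assume "s \<noteq> []"
    have "w = butlast (w @ [a])" by simp
    also have "\<dots> = p @ u @ butlast s" using v \<open>s \<noteq> []\<close> by (simp add: butlast_append)
    finally have "w = p @ u @ butlast s" .
    with assms(1) \<open>is_square u\<close> show False unfolding square_free_def by blast
  qed
  with v r that show thesis by simp
qed

lemma omega_minus_extension_count:
  "k * omega_minus n k \<le> omega_minus (Suc n) k + (\<Sum>j\<in>{1..n}. omega_minus j k)"
proof -
  define E where "E = (\<lambda>(w, a). w @ [a]) ` (square_free_words k n \<times> {0..<k})"
  define Square_ending where "Square_ending i = {v \<in> E. \<exists>p r. v = p @ r @ r \<and> length r = i}" for i
  have length_E: "length v = Suc n" if "v \<in> E" for v
    using that unfolding E_def square_free_words_def by auto
  have card_E: "card E = omega_minus n k * k"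
    unfolding E_def omega_minus_eq_card
    by (subst card_image) (auto simp: inj_on_def card_cartesian_product)
  have E_cases: "E \<subseteq> square_free_words k (Suc n) \<union> (\<Union>i\<in>{1..n}. Square_ending i)"
  proof
    fix v assume "v \<in> E"
    then obtain w a where wa: "v = w @ [a]" "w \<in> square_free_words k n" "a < k"
      unfolding E_def by auto
    show "v \<in> square_free_words k (Suc n) \<union> (\<Union>i\<in>{1..n}. Square_ending i)"
    proof (cases "square_free v")
      case True
      then show ?thesis using wa unfolding square_free_words_def by auto
    next
      case False
      then obtain p r where pr: "v = p @ r @ r" "r \<noteq> []"
        using square_free_snoc_cases[of w a] wa unfolding square_free_words_def by auto
      have "length r \<in> {1..n}" using length_E[OF \<open>v \<in> E\<close>] pr by (cases r) auto
      moreover have "v \<in> Square_ending (length r)" using pr \<open>v \<in> E\<close> unfolding Square_ending_def by blast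
      ultimately show ?thesis by blast
    qed
  qed
  \<comment> \<open>such a word is determined by its square-free prefix of length \<open>n + 1 - i\<close>\<close>
  have card_Square_ending: "card (Square_ending i) \<le> omega_minus (Suc n - i) k" if i: "i \<in> {1..n}" for i
    unfolding omega_minus_eq_card
  proof (rule card_inj_on_le[where f = "take (Suc n - i)"])
    have Square_ending_shape: "\<exists>p r. v = p @ r @ r \<and> length r = i \<and> take (Suc n - i) v = p @ r"
      if "v \<in> Square_ending i" for v
    proof -
      have "v \<in> E" "\<exists>p r. v = p @ r @ r \<and> length r = i"
        using that unfolding Square_ending_def by simp_all
      then obtain p r where pr: "v = p @ r @ r" "length r = i" "v \<in> E" by blast
      have "take (Suc n - i) v = p @ r" using length_E[OF pr(3)] pr(1,2) by simp
      with pr(1,2) show ?thesis by blast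
    qed
    show "inj_on (take (Suc n - i)) (Square_ending i)"
    proof (rule inj_onI)
      fix v1 v2 assume "v1 \<in> Square_ending i" "v2 \<in> Square_ending i" and eq: "take (Suc n - i) v1 = take (Suc n - i) v2"
      obtain p1 r1 where v1: "v1 = p1 @ r1 @ r1" "length r1 = i" "take (Suc n - i) v1 = p1 @ r1"
        using Square_ending_shape[OF \<open>v1 \<in> Square_ending i\<close>] by blast
      obtain p2 r2 where v2: "v2 = p2 @ r2 @ r2" "length r2 = i" "take (Suc n - i) v2 = p2 @ r2"
        using Square_ending_shape[OF \<open>v2 \<in> Square_ending i\<close>] by blast
      have "p1 @ r1 = p2 @ r2" using eq v1(3) v2(3) by simp
      then have "p1 = p2 \<and> r1 = r2" using v1(2) v2(2) by (simp add: append_eq_append_conv)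
      then show "v1 = v2" using v1(1) v2(1) by simp
    qed
    show "take (Suc n - i) ` Square_ending i \<subseteq> square_free_words k (Suc n - i)"
    proof
      fix t assume "t \<in> take (Suc n - i) ` Square_ending i"
      then obtain v where "v \<in> E" "t = take (Suc n - i) v" unfolding Square_ending_def by auto
      then obtain w a where t: "t = take (Suc n - i) (w @ [a])" and w: "w \<in> square_free_words k n"
        unfolding E_def by auto
      have "Suc n - i \<le> n" using i by auto
      moreover have "length w = n" using w unfolding square_free_words_def by simp
      ultimately have "t = take (Suc n - i) w" using t by simp
      then show "t \<in> square_free_words k (Suc n - i)"
        using take_in_square_free_words[OF w \<open>Suc n - i \<le> n\<close>] by simp
    qed
  qed (rule finite_square_free_words)
  have "omega_minus n k * k \<le> card (square_free_words k (Suc n) \<union> (\<Union>i\<in>{1..n}. Square_ending i))"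
    unfolding card_E[symmetric] using E_cases
    by (intro card_mono) (auto simp: finite_square_free_words Square_ending_def E_def)
  also have "\<dots> \<le> card (square_free_words k (Suc n)) + (\<Sum>i\<in>{1..n}. card (Square_ending i))"
    by (intro order.trans[OF card_Un_le] add_left_mono card_UN_le) simp
  also have "\<dots> \<le> omega_minus (Suc n) k + (\<Sum>i\<in>{1..n}. omega_minus (Suc n - i) k)"
    using card_Square_ending unfolding omega_minus_eq_card by (intro add_left_mono sum_mono) auto
  also have "(\<Sum>i\<in>{1..n}. omega_minus (Suc n - i) k) = (\<Sum>j\<in>{1..n}. omega_minus j k)"
    by (subst sum.atLeastAtMost_rev) (auto intro!: sum.cong)
  finally show ?thesis by (simp add: mult.commute)
qed

lemma omega_minus_Suc_ge_double:
  assumes "4 \<le> k" and "(\<Sum>j\<le>n. omega_minus j k) \<le> 2 * omega_minus n k"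
  shows "2 * omega_minus n k \<le> omega_minus (Suc n) k"
proof -
  have "4 * omega_minus n k \<le> k * omega_minus n k" using assms(1) by simp
  also have "\<dots> \<le> omega_minus (Suc n) k + (\<Sum>j\<in>{1..n}. omega_minus j k)"
    by (rule omega_minus_extension_count)
  also have "(\<Sum>j\<in>{1..n}. omega_minus j k) \<le> (\<Sum>j\<le>n. omega_minus j k)"
    by (rule sum_mono2) auto
  finally show ?thesis using assms(2) by linarith
qed

lemma sum_omega_minus_le_double:
  assumes "4 \<le> k"
  shows "(\<Sum>j\<le>n. omega_minus j k) \<le> 2 * omega_minus n k"
proof (induction n)
  case (Suc n)
  then show ?case using omega_minus_Suc_ge_double[OF assms Suc] by simp
qed (simp add: omega_minus_0)

lemma two_power_le_omega_minus:
  assumes "4 \<le> k"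
  shows "2 ^ n \<le> omega_minus n k"
proof (induction n)
  case (Suc n)
  then show ?case
    using omega_minus_Suc_ge_double[OF assms sum_omega_minus_le_double[OF assms], of n] by simp
qed (simp add: omega_minus_0)

lemma omega_minus_1_le: "omega_minus 1 k \<le> k"
proof -
  have "square_free_words k 1 \<subseteq> (\<lambda>a. [a]) ` {0..<k}"
    unfolding square_free_words_def by (auto simp: length_Suc_conv)
  then have "card (square_free_words k 1) \<le> card ((\<lambda>a. [a]) ` {0..<k})"
    by (intro card_mono) auto
  also have "\<dots> \<le> k" using card_image_le[of "{0..<k}" "\<lambda>a. [a]"] by simp
  finally show ?thesis unfolding omega_minus_eq_card .
qed

lemma omega_minus_Suc_Suc_le: "omega_minus (Suc (Suc n)) k \<le> (k - 1) * omega_minus (Suc n) k"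
proof -
  define S where "S = Sigma (square_free_words k (Suc n)) (\<lambda>w. {0..<k} - {last w})"
  have "square_free_words k (Suc (Suc n)) \<subseteq> (\<lambda>(w, a). w @ [a]) ` S"
  proof
    fix v assume v: "v \<in> square_free_words k (Suc (Suc n))"
    obtain u b a where v_eq: "v = u @ [b] @ [a]"
    proof -
      have "length v = Suc (Suc n)" using v unfolding square_free_words_def by simp
      then obtain w a where "v = w @ [a]" "length w = Suc n" by (cases v rule: rev_exhaust) auto
      moreover from this obtain u b where "w = u @ [b]" by (cases w rule: rev_exhaust) auto
      ultimately show thesis using that by simp
    qed
    have "a \<noteq> b"
    proof
      assume "a = b"
      then have "v = u @ ([b] @ [b]) @ []" using v_eq by simp
      with v show False unfolding square_free_words_def square_free_def is_square_def by blast
    qed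
    moreover have "u @ [b] \<in> square_free_words k (Suc n)"
      using take_in_square_free_words[OF v, of "Suc n"] v v_eq
      unfolding square_free_words_def by simp
    moreover have "a < k" using v v_eq unfolding square_free_words_def by auto
    ultimately show "v \<in> (\<lambda>(w, a). w @ [a]) ` S"
      unfolding S_def using v_eq by (intro image_eqI[where x = "(u @ [b], a)"]) auto
  qed
  then have "card (square_free_words k (Suc (Suc n))) \<le> card S"
    by (intro order.trans[OF card_mono card_image_le]) (auto simp: S_def finite_square_free_words)
  also have "card S = (\<Sum>w\<in>square_free_words k (Suc n). card ({0..<k} - {last w}))"
    unfolding S_def by (rule card_SigmaI) (auto simp: finite_square_free_words)
  also have "\<dots> = (\<Sum>w\<in>square_free_words k (Suc n). k - 1)"
  proof (rule sum.cong)
    fix w assume "w \<in> square_free_words k (Suc n)"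
    then have "last w \<in> set w" "set w \<subseteq> {0..<k}"
      unfolding square_free_words_def by (auto intro: last_in_set)
    then have "last w \<in> {0..<k}" by blast
    then show "card ({0..<k} - {last w}) = k - 1" by simp
  qed simp
  finally show ?thesis unfolding omega_minus_eq_card by (simp add: mult.commute)
qed

lemma omega_minus_Suc_le: "omega_minus (Suc n) k \<le> k * (k - 1) ^ n"
proof (induction n)
  case (Suc n)
  have "omega_minus (Suc (Suc n)) k \<le> (k - 1) * omega_minus (Suc n) k"
    by (rule omega_minus_Suc_Suc_le)
  also have "\<dots> \<le> (k - 1) * (k * (k - 1) ^ n)" using Suc by simp
  finally show ?case by (simp add: ac_simps)
qed (use omega_minus_1_le[of k] in simp)

fun no_adjacent_True :: "bool list \<Rightarrow> bool" where
  "no_adjacent_True (a # b # r) \<longleftrightarrow> \<not> (a \<and> b) \<and> no_adjacent_True (b # r)"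
| "no_adjacent_True _ \<longleftrightarrow> True"

lemma no_adjacent_True_Cons_False [simp]: "no_adjacent_True (False # b) = no_adjacent_True b"
  by (cases b) auto

lemma not_no_adjacent_True: "\<not> no_adjacent_True (p @ True # True # s)"
proof (induction p)
  case (Cons a p)
  then show ?case by (cases p) auto
qed simp

lemma square_free_if_filter_square_free:
  assumes sf: "square_free (filter (\<lambda>c. \<not> P c) v)" and sparse: "no_adjacent_True (map P v)"
  shows "square_free v"
proof (rule ccontr)
  assume "\<not> square_free v"
  then obtain p r s where v: "v = p @ (r @ r) @ s" and "r \<noteq> []"
    unfolding square_free_def is_square_def by blast
  let ?Q = "\<lambda>c. \<not> P c"
  have "filter ?Q r = []"
  proof (rule ccontr)
    assume "filter ?Q r \<noteq> []"
    moreover have "filter ?Q v = filter ?Q p @ (filter ?Q r @ filter ?Q r) @ filter ?Q s"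
      using v by simp
    ultimately show False using sf unfolding square_free_def is_square_def by blast
  qed
  then have all_P: "\<forall>c\<in>set r. P c" by (simp add: filter_empty_conv)
  \<comment> \<open>a square made of marked letters contains two adjacent marked letters\<close>
  obtain r1 c where r1: "r = r1 @ [c]" using \<open>r \<noteq> []\<close> by (cases r rule: rev_exhaust) auto
  obtain d r2 where r2: "r = d # r2" using \<open>r \<noteq> []\<close> by (cases r) auto
  have "c \<in> set r" by (simp add: r1)
  moreover have "d \<in> set r" by (simp add: r2)
  ultimately have "P c" "P d" using all_P by blast+
  have "r @ r = (r1 @ [c]) @ r" using r1 by simp
  also have "\<dots> = r1 @ c # d # r2" using r2 by simp
  finally have "map P v = map P (p @ r1) @ P c # P d # map P (r2 @ s)"
    using v by simp
  with sparse \<open>P c\<close> \<open>P d\<close> show False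
    using not_no_adjacent_True[of "map P (p @ r1)" "map P (r2 @ s)"] by simp
qed

fun insert_marks :: "'a \<Rightarrow> bool list \<Rightarrow> 'a list \<Rightarrow> 'a list" where
  "insert_marks z [] w = []"
| "insert_marks z (True # b) w = z # insert_marks z b w"
| "insert_marks z (False # b) w = hd w # insert_marks z b (tl w)"

lemma length_insert_marks [simp]: "length (insert_marks z b w) = length b"
  by (induction z b w rule: insert_marks.induct) auto

lemma insert_marks_inverse:
  "length w = count_list b False \<Longrightarrow> z \<notin> set w \<Longrightarrow>
    map (\<lambda>c. c = z) (insert_marks z b w) = b \<and> filter (\<lambda>c. c \<noteq> z) (insert_marks z b w) = w
    \<and> set (insert_marks z b w) \<subseteq> insert z (set w)"
proof (induction z b w rule: insert_marks.induct)
  case (3 z b w)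
  then obtain h t where "w = h # t" by (cases w) auto
  with 3 show ?case by auto
qed auto

definition sparse_patterns :: "nat \<Rightarrow> bool list set" where
  "sparse_patterns m = {b. length b = m \<and> no_adjacent_True b}"

lemma finite_sparse_patterns: "finite (sparse_patterns m)"
proof -
  have "finite {b :: bool list. length b = m}"
    using finite_lists_length_eq[of "UNIV :: bool set" m] by simp
  then show ?thesis by (rule finite_subset[rotated]) (auto simp: sparse_patterns_def)
qed

lemma sparse_patterns_0: "sparse_patterns 0 = {[]}"
  unfolding sparse_patterns_def by auto

lemma sparse_patterns_Suc_0: "sparse_patterns (Suc 0) = {[False], [True]}"
  unfolding sparse_patterns_def by (auto simp: length_Suc_conv)

lemma sparse_patterns_Suc_Suc:
  "sparse_patterns (Suc (Suc m))
    = Cons False ` sparse_patterns (Suc m) \<union> (\<lambda>b. True # False # b) ` sparse_patterns m"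
proof (intro set_eqI iffI)
  fix b assume b: "b \<in> sparse_patterns (Suc (Suc m))"
  then obtain c d b' where b_eq: "b = c # d # b'" and "length b' = m"
    unfolding sparse_patterns_def by (auto simp: length_Suc_conv)
  with b show "b \<in> Cons False ` sparse_patterns (Suc m) \<union> (\<lambda>b. True # False # b) ` sparse_patterns m"
    unfolding sparse_patterns_def by (cases c; cases d) auto
qed (auto simp: sparse_patterns_def)

lemma power_le_sparse_pattern_weight:
  fixes E \<rho> :: real
  assumes "0 \<le> E" "0 \<le> \<rho>" "\<rho> \<le> E + 1" "\<rho>\<^sup>2 \<le> E * (\<rho> + 1)"
  shows "\<rho> ^ m \<le> (\<Sum>b\<in>sparse_patterns m. E ^ count_list b False)"
proof -
  define W where "W m = (\<Sum>b\<in>sparse_patterns m. E ^ count_list b False)" for m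
  have W_Suc_Suc: "W (Suc (Suc m)) = E * W (Suc m) + E * W m" for m
  proof -
    have "W (Suc (Suc m)) = (\<Sum>b\<in>Cons False ` sparse_patterns (Suc m). E ^ count_list b False)
        + (\<Sum>b\<in>(\<lambda>b. True # False # b) ` sparse_patterns m. E ^ count_list b False)"
      unfolding W_def sparse_patterns_Suc_Suc
      by (rule sum.union_disjoint) (auto simp: finite_sparse_patterns)
    also have "\<dots> = E * W (Suc m) + E * W m"
      by (simp add: W_def sum.reindex inj_on_def sum_distrib_left)
    finally show ?thesis .
  qed
  show ?thesis
    unfolding W_def[symmetric]
  proof (induction m rule: induct_nat_012)
    case 0 then show ?case by (simp add: W_def sparse_patterns_0)
  next
    case 1 then show ?case using assms(3) by (simp add: W_def sparse_patterns_Suc_0)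
  next
    case (ge2 m)
    have "\<rho> ^ Suc (Suc m) = \<rho> ^ m * \<rho>\<^sup>2" by (simp add: power2_eq_square)
    also have "\<dots> \<le> \<rho> ^ m * (E * (\<rho> + 1))" using assms(2,4) by (simp add: mult_left_mono)
    also have "\<dots> = E * \<rho> ^ Suc m + E * \<rho> ^ m" by (simp add: algebra_simps)
    also have "\<dots> \<le> E * W (Suc m) + E * W m"
      using ge2 assms(1) by (intro add_mono mult_left_mono)
    finally show ?case by (simp only: W_Suc_Suc)
  qed
qed

lemma sum_omega_minus_sparse_patterns_le:
  "(\<Sum>b\<in>sparse_patterns m. omega_minus (count_list b False) x) \<le> omega_minus m (Suc x)"
proof -
  define D where "D = Sigma (sparse_patterns m) (\<lambda>b. square_free_words x (count_list b False))"
  have inverse: "map (\<lambda>c. c = x) (insert_marks x b w) = b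
      \<and> filter (\<lambda>c. c \<noteq> x) (insert_marks x b w) = w
      \<and> set (insert_marks x b w) \<subseteq> insert x (set w)" if "(b, w) \<in> D" for b w
    using that unfolding D_def square_free_words_def by (intro insert_marks_inverse) auto
  have "(\<Sum>b\<in>sparse_patterns m. omega_minus (count_list b False) x) = card D"
    unfolding D_def omega_minus_eq_card
    by (rule card_SigmaI [symmetric]) (auto simp: finite_sparse_patterns finite_square_free_words)
  also have "\<dots> \<le> card (square_free_words (Suc x) m)"
  proof (rule card_inj_on_le[where f = "\<lambda>(b, w). insert_marks x b w"])
    show "inj_on (\<lambda>(b, w). insert_marks x b w) D"
    proof (rule inj_onI, clarify)
      fix b1 w1 b2 w2 assume bw1: "(b1, w1) \<in> D" and bw2: "(b2, w2) \<in> D"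
        and eq: "insert_marks x b1 w1 = insert_marks x b2 w2"
      from inverse[OF bw1] inverse[OF bw2] eq show "b1 = b2 \<and> w1 = w2" by metis
    qed
    show "(\<lambda>(b, w). insert_marks x b w) ` D \<subseteq> square_free_words (Suc x) m"
    proof clarify
      fix b w assume bw: "(b, w) \<in> D"
      then have b: "b \<in> sparse_patterns m" and w: "w \<in> square_free_words x (count_list b False)"
        unfolding D_def by auto
      note inv = inverse[OF bw]
      have "square_free (filter (\<lambda>c. c \<noteq> x) (insert_marks x b w))"
        using w inv unfolding square_free_words_def by simp
      moreover have "no_adjacent_True (map (\<lambda>c. c = x) (insert_marks x b w))"
        using b inv unfolding sparse_patterns_def by simp
      ultimately have "square_free (insert_marks x b w)" by (rule square_free_if_filter_square_free)
      moreover have "set (insert_marks x b w) \<subseteq> {0..<Suc x}"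
      proof -
        have "set w \<subseteq> {0..<x}" using w unfolding square_free_words_def by simp
        then show ?thesis using inv by fastforce
      qed
      ultimately show "insert_marks x b w \<in> square_free_words (Suc x) m"
        using b unfolding sparse_patterns_def square_free_words_def by simp
    qed
  qed (rule finite_square_free_words)
  finally show ?thesis unfolding omega_minus_eq_card .
qed

lemma power_le_omega_minus_Suc:
  fixes \<rho> :: real
  assumes pos: "\<And>n. 0 < omega_minus n x" and "0 \<le> \<rho>"
    and "\<rho> \<le> exp (s_minus x) + 1" and "\<rho>\<^sup>2 \<le> exp (s_minus x) * (\<rho> + 1)"
  shows "\<rho> ^ n \<le> omega_minus n (Suc x)"
proof -
  have "\<rho> ^ n \<le> (\<Sum>b\<in>sparse_patterns n. exp (s_minus x) ^ count_list b False)"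
    using assms(2-4) by (intro power_le_sparse_pattern_weight) auto
  also have "\<dots> \<le> (\<Sum>b\<in>sparse_patterns n. real (omega_minus (count_list b False) x))"
    by (intro sum_mono exp_s_minus_power_le pos)
  also have "\<dots> \<le> omega_minus n (Suc x)"
    using sum_omega_minus_sparse_patterns_le[where m = n and x = x] by (simp flip: of_nat_sum)
  finally show ?thesis .
qed

lemma exp_ln_2_div_le:
  assumes "1 \<le> x"
  shows "exp (ln 2 / real x) \<le> 1 + 1 / real x"
proof -
  have x_pos: "real x > 0" using assms by simp
  have "1 + real x * (1 / real x) \<le> (1 + 1 / real x) ^ x"
  proof (rule Bernoulli_inequality)
    have "0 \<le> 1 / real x" by simp
    then show "- 1 \<le> 1 / real x" by linarith
  qed
  then have "ln 2 \<le> ln ((1 + 1 / real x) ^ x)" using x_pos by simp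
  also have "\<dots> = real x * ln (1 + 1 / real x)" by (simp add: ln_realpow)
  finally have "ln 2 / real x \<le> ln (1 + 1 / real x)" using x_pos by (simp add: field_simps)
  then have "exp (ln 2 / real x) \<le> exp (ln (1 + 1 / real x))" by simp
  then show ?thesis using x_pos by (simp add: add_pos_pos)
qed

lemma s_minus_Suc_ge:
  assumes "3 \<le> x" and pos: "\<And>n. 0 < omega_minus n x"
  shows "s_minus x + ln 2 / real x \<le> s_minus (Suc x)"
proof -
  define E where "E = exp (s_minus x)"
  define q where "q = exp (ln 2 / real x)"
  have x: "real x \<ge> 3" using assms(1) by simp
  have E_pos: "0 < E" unfolding E_def by simp
  have "E \<le> real x - 1"
    unfolding E_def
  proof (rule exp_s_minus_le[OF pos, where C = "real x"])
    fix n
    have "real (omega_minus (Suc n) x) \<le> real (x * (x - 1) ^ n)"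
      using omega_minus_Suc_le[of n x] by (simp only: of_nat_le_iff)
    then show "real (omega_minus (Suc n) x) \<le> real x * (real x - 1) ^ n"
      using assms(1) by (simp add: of_nat_diff)
  qed (use x in simp)
  have q: "1 \<le> q" "q \<le> 1 + 1 / real x"
    unfolding q_def using exp_ln_2_div_le[of x] assms(1) by simp_all
  have "E * q \<le> E + 1"
  proof -
    have "E * q \<le> E * (1 + 1 / real x)" using q E_pos by simp
    also have "\<dots> \<le> E + 1" using \<open>E \<le> real x - 1\<close> x by (simp add: field_simps)
    finally show ?thesis .
  qed
  moreover have "(E * q)\<^sup>2 \<le> E * (E * q + 1)"
  proof -
    have "q * (q - 1) \<le> (1 + 1 / real x) * (1 / real x)"
      using q by (intro mult_mono) auto
    also have "\<dots> \<le> 1 / (real x - 1)" using x by (simp add: field_simps)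
    also have "\<dots> \<le> 1 / E" using \<open>E \<le> real x - 1\<close> E_pos by (simp add: frac_le)
    finally have "E * (q * (q - 1)) \<le> 1" using E_pos by (simp add: field_simps)
    then have "E * (E * (q * (q - 1))) \<le> E" using E_pos by (simp add: mult_left_le)
    then show ?thesis by (simp add: power2_eq_square algebra_simps)
  qed
  ultimately have "(E * q) ^ n \<le> omega_minus n (Suc x)" for n
    using E_pos q unfolding E_def by (intro power_le_omega_minus_Suc pos) auto
  then have "ln (E * q) \<le> s_minus (Suc x)"
    using E_pos q by (intro ln_le_s_minus) auto
  then show ?thesis unfolding E_def q_def by (simp add: ln_mult)
qed

theorem mainTheorem9:
  fixes x :: nat
  assumes "x \<ge> 3"
  shows "s_minus (x + 1) \<ge> s_minus x + ln 2 / real x"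
proof (cases "\<forall>n. 0 < omega_minus n x")
  case True
  then show ?thesis using s_minus_Suc_ge[OF assms] by simp
next
  case False
  then obtain N where "omega_minus N x = 0" by auto
  then have "s_minus x = 0" by (rule s_minus_eq_0)
  moreover have "ln 2 \<le> s_minus (x + 1)"
    using two_power_le_omega_minus[of "x + 1"] assms by (intro ln_le_s_minus) auto
  moreover have "ln 2 / real x \<le> ln 2" using assms by (simp add: divide_le_eq)
  ultimately show ?thesis by simp
qed

end
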